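(* Let $q\in(0,1]$. Consider the parametric convex semi-infinite problem described in the context, let $((\bar c,\bar b),\bar x)\in\operatorname{gph}\mathcal{S}$, and assume that $\mathcal{L}$ is not $q$-order calm at $((f(\bar x)+\langle\bar c,\bar x\rangle,\bar b),\bar x)\in\operatorname{gph}\mathcal{L}$. Then there exist a sequence $(x^r)_{r\in\mathbb{N}}$ in $\mathbb{R}^n$ converging to $\bar x$ with $\bar f(x^r)>0$ and $\bar f(x^r)\downarrow0$, and a sequence $(v^r)_{r\in\mathbb{N}}$ with $v^r\in\partial\bar f(x^r)\setminus\{0_n\}$, such that $v^r\to0_n$ and $$d(x^r,\mathcal{S}(\bar c,\bar b))\ge\frac{\bar f(x^r)}{\|v^r\|}\quad\text{for all } r.$$
   Context: Setting: $T$ is a compact subset of a metric space $Z$ with $T\neq Z$; $f:\mathbb{R}^n\to\mathbb{R}$ and $g_t:\mathbb{R}^n\to\mathbb{R}$ ($t\in T$) are convex, with $(t,x)\mapsto g_t(x)$ continuous on $T\times\mathbb{R}^n$. $\mathcal{C}(T,\mathbb{R})$ is the space of continuous $b:T\to\mathbb{R}$, $t\mapsto b_t$, with $\|b\|_\infty=\max_t|b_t|$. For $(c,b)\in\mathbb{R}^n\times\mathcal{C}(T,\mathbb{R})$, $P(c,b)$: minimize $f(x)+\langle c,x\rangle$ subject to $g_t(x)\le b_t$, $t\in T$; $\mathcal{S}(c,b)$ is its optimal solution set. $\mathcal{L}(\alpha,b)=\{x: f(x)+\langle\bar c,x\rangle\le\alpha,\ g_t(x)\le b_t,\ t\in T\}$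 on $\mathbb{R}\times\mathcal{C}(T,\mathbb{R})$ normed by $\max\{|\alpha|,\|b\|_\infty\}$. $\bar f(x):=\sup\{f(x)-f(\bar x)+\langle\bar c,x-\bar x\rangle;\ g_t(x)-\bar b_t,\ t\in T\}$. $\partial$ is the convex subdifferential; $\|\cdot\|$ Euclidean. A set-valued $S:Y\rightrightarrows X$ between metric spaces is $q$-order calm at $(\bar y,\bar x)\in\operatorname{gph}S$ if there exist $\tau>0$ and neighbourhoods $U$ of $\bar x$, $V$ of $\bar y$ with $\tau\,d(x,S(\bar y))\le d(y,\bar y)^q$ for all $y\in V$, $x\in S(y)\cap U$. *)

theory Defs
  imports "HOL-Analysis.Analysis"
begin

definition supdist :: "'z set \<Rightarrow> ('z \<Rightarrow> real) \<Rightarrow> ('z \<Rightarrow> real) \<Rightarrow> real" where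
  "supdist T b b' = Sup (insert 0 ((\<lambda>t. \<bar>b t - b' t\<bar>) ` T))"

definition pdist :: "'z set \<Rightarrow> real \<times> ('z \<Rightarrow> real) \<Rightarrow> real \<times> ('z \<Rightarrow> real) \<Rightarrow> real" where
  "pdist T p p' = max \<bar>fst p - fst p'\<bar> (supdist T (snd p) (snd p'))"

definition param_space :: "'z::topological_space set \<Rightarrow> (real \<times> ('z \<Rightarrow> real)) set" where
  "param_space T = {p. continuous_on T (snd p)}"

definition q_order_calm ::
  "('y \<Rightarrow> 'y \<Rightarrow> real) \<Rightarrow> 'y set \<Rightarrow> ('y \<Rightarrow> 'x::metric_space set) \<Rightarrow> real \<Rightarrow> 'y \<Rightarrow> 'x \<Rightarrow> bool" where
  "q_order_calm d Y S q yb xb \<longleftrightarrow>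
     (\<exists>\<tau>>0. \<exists>\<epsilon>>0. \<forall>y\<in>Y. \<forall>x\<in>S y.
        d y yb < \<epsilon> \<longrightarrow> dist x xb < \<epsilon> \<longrightarrow> \<tau> * infdist x (S yb) \<le> (d y yb) powr q)"

definition feas :: "'z set \<Rightarrow> ('z \<Rightarrow> real^'n \<Rightarrow> real) \<Rightarrow> ('z \<Rightarrow> real) \<Rightarrow> (real^'n) set" where
  "feas T g b = {x. \<forall>t\<in>T. g t x \<le> b t}"

definition Sol :: "'z set \<Rightarrow> (real^'n \<Rightarrow> real) \<Rightarrow> ('z \<Rightarrow> real^'n \<Rightarrow> real)
    \<Rightarrow> real^'n \<Rightarrow> ('z \<Rightarrow> real) \<Rightarrow> (real^'n) set" where
  "Sol T f g c b = {x \<in> feas T g b. \<forall>y \<in> feas T g b. f x + c \<bullet> x \<le> f y + c \<bullet> y}"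

definition Lev :: "'z set \<Rightarrow> (real^'n \<Rightarrow> real) \<Rightarrow> ('z \<Rightarrow> real^'n \<Rightarrow> real)
    \<Rightarrow> real^'n \<Rightarrow> real \<times> ('z \<Rightarrow> real) \<Rightarrow> (real^'n) set" where
  "Lev T f g cb p = {x. f x + cb \<bullet> x \<le> fst p \<and> (\<forall>t\<in>T. g t x \<le> snd p t)}"

definition fbar :: "'z set \<Rightarrow> (real^'n \<Rightarrow> real) \<Rightarrow> ('z \<Rightarrow> real^'n \<Rightarrow> real)
    \<Rightarrow> real^'n \<Rightarrow> ('z \<Rightarrow> real) \<Rightarrow> real^'n \<Rightarrow> real^'n \<Rightarrow> real" where
  "fbar T f g cb bb xb x =
     Sup (insert (f x - f xb + cb \<bullet> (x - xb)) ((\<lambda>t. g t x - bb t) ` T))"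

definition subdiff :: "('a::real_inner \<Rightarrow> real) \<Rightarrow> 'a \<Rightarrow> 'a set" where
  "subdiff F x = {v. \<forall>y. F x + v \<bullet> (y - x) \<le> F y}"

end

theory Submission
  imports Defs
begin

text \<open>
  The residual \<open>fbar\<close> is convex and nonnegative, its zero set is
  \<open>\<S>(cbar, bbar) = \<L>(f(xb) + \<langle>cbar, xb\<rangle>, bbar)\<close>, and \<open>fbar(x) \<le> d(p, pbar)\<close> for \<open>x \<in> \<L>(p)\<close>.
  As \<open>\<delta> \<le> \<delta>\<^sup>q\<close> for \<open>\<delta> \<le> 1\<close>, failure of \<open>q\<close>-order calmness gives points \<open>x\<close> arbitrarily close
  to \<open>xb\<close> with \<open>0 < fbar(x) < \<epsilon> d(x, \<S>)\<close>. Minimising the perturbation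
  \<open>fbar + (2 fbar(x) / d(x, \<S>)) \<parallel>\<cdot> - x\<parallel>\<close>, as in Ekeland's principle, yields a nearby \<open>y\<close> with
  \<open>fbar(y) > 0\<close> at which separating the epigraph of \<open>fbar\<close> from a downward cone produces a
  subgradient \<open>v\<close> of norm at most \<open>2\<epsilon>\<close>; the subgradient inequality on \<open>\<S>\<close> then gives
  \<open>fbar(y) / \<parallel>v\<parallel> \<le> d(y, \<S>)\<close>. A monotone subsequence makes the residuals decrease.
\<close>

lemma convex_strict_epigraph:
  assumes "convex_on UNIV F"
  shows "convex {p. F (fst p) < snd p}"
proof (rule convexI)
  fix p q :: "'a \<times> real" and u v :: real
  assume p: "p \<in> {p. F (fst p) < snd p}" and q: "q \<in> {p. F (fst p) < snd p}"
    and uv: "0 \<le> u" "0 \<le> v" "u + v = 1"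
  have "F (u *\<^sub>R fst p + v *\<^sub>R fst q) \<le> u * F (fst p) + v * F (fst q)"
    using assms uv by (auto simp: convex_on_def)
  also have "\<dots> < u * snd p + v * snd q"
    using p q uv by (smt (verit, best) mem_Collect_eq mult_left_mono mult_strict_left_mono)
  finally show "u *\<^sub>R p + v *\<^sub>R q \<in> {p. F (fst p) < snd p}" by simp
qed

lemma convex_hypograph:
  assumes "concave_on UNIV G"
  shows "convex {p. snd p \<le> G (fst p)}"
proof (rule convexI)
  fix p q :: "'a \<times> real" and u v :: real
  assume p: "p \<in> {p. snd p \<le> G (fst p)}" and q: "q \<in> {p. snd p \<le> G (fst p)}"
    and uv: "0 \<le> u" "0 \<le> v" "u + v = 1"
  have "u * snd p + v * snd q \<le> u * G (fst p) + v * G (fst q)"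
    using p q uv by (simp add: add_mono mult_left_mono)
  also have "\<dots> \<le> G (u *\<^sub>R fst p + v *\<^sub>R fst q)"
    using assms uv by (auto simp: concave_on_iff)
  finally show "u *\<^sub>R p + v *\<^sub>R q \<in> {p. snd p \<le> G (fst p)}" by simp
qed

lemma concave_on_minus_dist:
  fixes y :: "'a::real_normed_vector"
  assumes "0 \<le> e"
  shows "concave_on UNIV (\<lambda>z. c - e * dist y z)"
  unfolding concave_on_def minus_diff_eq
  by (intro convex_on_diff convex_on_cmul convex_on_dist assms)
    (simp_all add: concave_on_def convex_on_const convex_on_dist[OF convex_UNIV])

lemma separating_hyperplane_epigraph_cone:
  fixes F :: "'a::euclidean_space \<Rightarrow> real"
  assumes cvx: "convex_on UNIV F" and e: "0 \<le> e"
    and lower: "\<And>z. F y - e * dist y z \<le> F z"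
  shows "\<exists>w \<beta>. 0 < \<beta> \<and> (\<forall>z. w \<bullet> (y - z) \<le> \<beta> * (F z - F y)) \<and> (\<forall>z. w \<bullet> (z - y) \<le> \<beta> * e * dist y z)"
proof -
  define A where "A = {p. F (fst p) < snd p}"
  define B where "B = {p. snd p \<le> F y - e * dist y (fst p)}"
  have "convex A" unfolding A_def using cvx by (rule convex_strict_epigraph)
  moreover have "convex B" unfolding B_def using e by (intro convex_hypograph concave_on_minus_dist)
  moreover have "(y, F y + 1) \<in> A" "(y, F y) \<in> B" by (simp_all add: A_def B_def)
  moreover have "B \<inter> A = {}" using lower by (auto simp: A_def B_def dest: order.trans[OF _ lower])
  ultimately obtain a c where "a \<noteq> 0" and "\<forall>p\<in>B. a \<bullet> p \<le> c" and "\<forall>p\<in>A. c \<le> a \<bullet> p"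
    using separating_hyperplane_sets[of B A] by blast
  then obtain w \<beta> where a0: "(w, \<beta>) \<noteq> 0"
    and below: "\<And>z s. s \<le> F y - e * dist y z \<Longrightarrow> w \<bullet> z + \<beta> * s \<le> c"
    and above: "\<And>z s. F z < s \<Longrightarrow> c \<le> w \<bullet> z + \<beta> * s"
    by (cases a) (auto simp: A_def B_def)
  have "\<beta> \<ge> 0" using below[of "F y" y] above[of y "F y + 1"] by (simp add: algebra_simps)
  moreover have "\<beta> \<noteq> 0"
  proof
    assume "\<beta> = 0"
    then have "w \<bullet> (y + w) \<le> w \<bullet> y" using below[of _ "y + w"] above[of y "F y + 1"] by force
    then have "w \<bullet> w = 0" by (intro order_antisym) (simp_all add: inner_add_right)
    with \<open>\<beta> = 0\<close> a0 show False by (simp add: zero_prod_def)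
  qed
  ultimately have \<beta>: "\<beta> > 0" by simp
  have above_graph: "c \<le> w \<bullet> z + \<beta> * F z" for z
  proof -
    have "(c - w \<bullet> z) / \<beta> \<le> F z"
    proof (rule dense_ge)
      fix s assume "F z < s"
      then have "c \<le> w \<bullet> z + \<beta> * s" by (rule above)
      then show "(c - w \<bullet> z) / \<beta> \<le> s" using \<beta> by (simp add: pos_divide_le_eq algebra_simps)
    qed
    then show ?thesis using \<beta> by (simp add: pos_divide_le_eq algebra_simps)
  qed
  have "w \<bullet> (y - z) \<le> \<beta> * (F z - F y)" for z
    using below[of "F y" y] above_graph[of z] unfolding inner_diff_right right_diff_distrib by simp
  moreover have "w \<bullet> (z - y) \<le> \<beta> * e * dist y z" for z
    using below[of "F y - e * dist y z" z] above_graph[of y]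
    unfolding inner_diff_right by (simp add: algebra_simps)
  ultimately show ?thesis using \<beta> by blast
qed

lemma exists_subgradient_norm_le:
  fixes F :: "'a::euclidean_space \<Rightarrow> real"
  assumes cvx: "convex_on UNIV F" and e: "0 \<le> e"
    and lower: "\<And>z. F y - e * dist y z \<le> F z"
  shows "\<exists>v\<in>subdiff F y. norm v \<le> e"
proof -
  obtain w \<beta> where \<beta>: "0 < \<beta>" and support: "\<And>z. w \<bullet> (y - z) \<le> \<beta> * (F z - F y)"
    and cone: "\<And>z. w \<bullet> (z - y) \<le> \<beta> * e * dist y z"
    using separating_hyperplane_epigraph_cone[OF assms] by blast
  have "norm w * norm w \<le> (\<beta> * e) * norm w"
    using cone[of "y + w"] by (simp add: dist_norm dot_square_norm power2_eq_square)
  then have norm_w: "norm w \<le> \<beta> * e" using \<beta> e by (cases "w = 0") auto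
  define v where "v = - (1 / \<beta>) *\<^sub>R w"
  have "F y + v \<bullet> (z - y) \<le> F z" for z
  proof -
    have "v \<bullet> (z - y) = w \<bullet> (y - z) / \<beta>" by (simp add: v_def inner_diff_right diff_divide_distrib)
    also have "\<dots> \<le> F z - F y" using support[of z] \<beta> by (simp add: pos_divide_le_eq mult.commute)
    finally show ?thesis by simp
  qed
  moreover have "norm v \<le> e" using norm_w \<beta> by (simp add: v_def pos_divide_le_eq mult.commute)
  ultimately show ?thesis by (auto simp: subdiff_def)
qed

lemma subgradient_quotient_le_infdist:
  assumes v: "v \<in> subdiff F y" "v \<noteq> 0" and S: "S \<noteq> {}" "\<And>z. z \<in> S \<Longrightarrow> F z \<le> 0"
  shows "F y / norm v \<le> infdist y S"
  unfolding infdist_notempty[OF S(1)]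
proof (rule cINF_greatest[OF S(1)])
  fix z assume "z \<in> S"
  then have "F y \<le> v \<bullet> (y - z)"
    using v(1) S(2)[of z] by (simp add: subdiff_def inner_diff_right) (smt (verit))
  also have "\<dots> \<le> norm v * dist y z" by (simp add: dist_norm norm_cauchy_schwarz)
  finally show "F y / norm v \<le> dist y z" using v(2) by (simp add: field_simps)
qed

lemma nonneg_plus_dist_attains_min:
  fixes F :: "'a::euclidean_space \<Rightarrow> real"
  assumes cont: "continuous_on UNIV F" and nonneg: "\<And>z. 0 \<le> F z" and "0 < \<epsilon>"
  shows "\<exists>y. \<forall>z. F y + \<epsilon> * dist x y \<le> F z + \<epsilon> * dist x z"
proof -
  define R where "R = F x / \<epsilon>"
  have "x \<in> cball x R" using nonneg[of x] \<open>0 < \<epsilon>\<close> by (simp add: R_def)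
  moreover have "continuous_on (cball x R) (\<lambda>z. F z + \<epsilon> * dist x z)"
    by (intro continuous_intros continuous_on_subset[OF cont]) auto
  ultimately obtain y where ymin: "\<forall>z\<in>cball x R. F y + \<epsilon> * dist x y \<le> F z + \<epsilon> * dist x z"
    using continuous_attains_inf[OF compact_cball, of x R] by blast
  have "F y + \<epsilon> * dist x y \<le> F z + \<epsilon> * dist x z" for z
  proof (cases "z \<in> cball x R")
    case False
    then have "F x < \<epsilon> * dist x z" using \<open>0 < \<epsilon>\<close> by (simp add: R_def not_le pos_divide_less_eq mult.commute)
    then show ?thesis using ymin \<open>x \<in> cball x R\<close> nonneg[of z] by fastforce
  qed (use ymin in blast)
  then show ?thesis by blast
qed

lemma exists_small_subgradient_near:
  fixes F :: "'a::euclidean_space \<Rightarrow> real"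
  defines "S \<equiv> {z. F z \<le> 0}"
  assumes cvx: "convex_on UNIV F" and nonneg: "\<And>z. 0 \<le> F z" and "S \<noteq> {}" and Fx: "0 < F x"
  shows "\<exists>y v. 0 < F y \<and> F y \<le> F x \<and> dist x y \<le> infdist x S / 2
    \<and> v \<in> subdiff F y \<and> v \<noteq> 0 \<and> norm v \<le> 2 * F x / infdist x S \<and> F y / norm v \<le> infdist y S"
proof -
  define D where "D = infdist x S"
  have cont: "continuous_on UNIV F" using convex_on_continuous[OF open_UNIV cvx] .
  then have "closed S" unfolding S_def by (intro closed_Collect_le continuous_intros) auto
  then have D: "D > 0" using Fx \<open>S \<noteq> {}\<close> by (simp add: D_def S_def infdist_pos_not_in_closed)
  define \<epsilon> where "\<epsilon> = 2 * F x / D"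
  have \<epsilon>: "\<epsilon> > 0" "\<epsilon> * D = 2 * F x" using D Fx by (simp_all add: \<epsilon>_def)
  obtain y where ymin: "\<And>z. F y + \<epsilon> * dist x y \<le> F z + \<epsilon> * dist x z"
    using nonneg_plus_dist_attains_min[OF cont nonneg \<epsilon>(1)] by blast
  have Fy: "F y + \<epsilon> * dist x y \<le> F x" using ymin[of x] by simp
  have "0 < F y"
  proof (rule ccontr)
    assume "\<not> 0 < F y"
    then have "D \<le> dist x y" unfolding D_def by (intro infdist_le) (simp add: S_def)
    then have "2 * F x \<le> \<epsilon> * dist x y" using \<epsilon> by (metis less_imp_le mult_left_mono)
    then show False using Fy Fx nonneg[of y] by simp
  qed
  moreover have "F y \<le> F x" using Fy \<epsilon>(1) by (smt (verit) zero_le_dist mult_nonneg_nonneg)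
  moreover have "dist x y \<le> D / 2"
  proof -
    have "\<epsilon> * dist x y \<le> \<epsilon> * (D / 2)" using Fy \<epsilon>(2) nonneg[of y] by simp
    then show ?thesis using \<epsilon>(1) by simp
  qed
  moreover obtain v where v: "v \<in> subdiff F y" "norm v \<le> \<epsilon>"
  proof -
    have "F y - \<epsilon> * dist y z \<le> F z" for z
      using ymin[of z] \<epsilon>(1) dist_triangle[of x z y] by (smt (verit) distrib_left mult_left_mono)
    then show ?thesis using exists_subgradient_norm_le[OF cvx] \<epsilon>(1) that by (meson less_imp_le)
  qed
  moreover have "v \<noteq> 0"
  proof
    assume "v = 0"
    then have "F y \<le> F z" for z using v(1) by (simp add: subdiff_def)
    moreover obtain z where "F z \<le> 0" using \<open>S \<noteq> {}\<close> by (auto simp: S_def)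
    ultimately show False using \<open>0 < F y\<close> by (meson not_le order_trans)
  qed
  moreover have "F y / norm v \<le> infdist y S"
    using v(1) \<open>v \<noteq> 0\<close> \<open>S \<noteq> {}\<close> by (rule subgradient_quotient_le_infdist) (simp add: S_def)
  ultimately show ?thesis unfolding D_def \<epsilon>_def by blast
qed

lemma decseq_subseq_if_pos_LIMSEQ_zero:
  fixes a :: "nat \<Rightarrow> real"
  assumes pos: "\<And>n. 0 < a n" and lim: "a \<longlonglongrightarrow> 0"
  shows "\<exists>\<sigma>. strict_mono \<sigma> \<and> decseq (\<lambda>n. a (\<sigma> n))"
proof -
  obtain \<sigma> where \<sigma>: "strict_mono \<sigma>" and "monoseq (\<lambda>n. a (\<sigma> n))"
    using seq_monosub by blast
  moreover have "\<not> incseq (\<lambda>n. a (\<sigma> n))"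
  proof
    assume inc: "incseq (\<lambda>n. a (\<sigma> n))"
    have "(\<lambda>n. a (\<sigma> n)) \<longlonglongrightarrow> 0" using LIMSEQ_subseq_LIMSEQ[OF lim \<sigma>] by (simp add: o_def)
    then have "a (\<sigma> 0) \<le> 0" by (rule LIMSEQ_le_const) (use incseqD[OF inc] in auto)
    with pos[of "\<sigma> 0"] show False by simp
  qed
  ultimately show ?thesis by (auto simp: monoseq_iff)
qed

lemma subgradient_sequence_if_no_linear_error_bound:
  fixes F :: "'a::euclidean_space \<Rightarrow> real"
  defines "S \<equiv> {z. F z \<le> 0}"
  assumes cvx: "convex_on UNIV F" and nonneg: "\<And>z. 0 \<le> F z" and "xb \<in> S"
    and no_bound: "\<And>e. 0 < e \<Longrightarrow> \<exists>x. dist x xb < e \<and> 0 < F x \<and> F x < e * infdist x S"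
  shows "\<exists>x v :: nat \<Rightarrow> 'a.
           x \<longlonglongrightarrow> xb
         \<and> (\<forall>r. F (x r) > 0)
         \<and> decseq (\<lambda>r. F (x r))
         \<and> (\<lambda>r. F (x r)) \<longlonglongrightarrow> 0
         \<and> (\<forall>r. v r \<in> subdiff F (x r) \<and> v r \<noteq> 0)
         \<and> v \<longlonglongrightarrow> 0
         \<and> (\<forall>r. infdist (x r) S \<ge> F (x r) / norm (v r))"
proof -
  have step: "\<exists>y v. 0 < F y \<and> F y < e \<and> dist y xb < 2 * e \<and> v \<in> subdiff F y \<and> v \<noteq> 0
      \<and> norm v < 2 * e \<and> F y / norm v \<le> infdist y S" if e: "0 < e" "e \<le> 1" for e
  proof -
    obtain x where x: "dist x xb < e" "0 < F x" "F x < e * infdist x S"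
      using no_bound e by blast
    have D: "infdist x S \<le> dist x xb" using \<open>xb \<in> S\<close> by (rule infdist_le)
    have "0 < infdist x S" using x e by (smt (verit) zero_less_mult_iff)
    moreover obtain y v where y: "0 < F y" "F y \<le> F x" "dist x y \<le> infdist x S / 2"
      and v: "v \<in> subdiff F y" "v \<noteq> 0" "norm v \<le> 2 * F x / infdist x S" "F y / norm v \<le> infdist y S"
      using exists_small_subgradient_near[OF cvx nonneg] x \<open>xb \<in> S\<close> unfolding S_def by blast
    moreover have "F x < e" using x e D by (smt (verit) mult_le_cancel_left1 mult_left_mono)
    moreover have "2 * F x / infdist x S < 2 * e" using x \<open>0 < infdist x S\<close> by (simp add: field_simps)
    moreover have "dist y xb < 2 * e" using x D y(3) e dist_triangle[of y xb x] by (simp add: dist_commute)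
    ultimately show ?thesis by (intro exI[of _ y] exI[of _ v]) auto
  qed
  define e :: "nat \<Rightarrow> real" where "e r = 1 / Suc r" for r
  have e: "0 < e r" "e r \<le> 1" for r by (simp_all add: e_def)
  obtain Y V where YV: "\<And>r. 0 < F (Y r) \<and> F (Y r) < e r \<and> dist (Y r) xb < 2 * e r
      \<and> V r \<in> subdiff F (Y r) \<and> V r \<noteq> 0 \<and> norm (V r) < 2 * e r \<and> F (Y r) / norm (V r) \<le> infdist (Y r) S"
    using step[OF e] by metis
  have e0: "(\<lambda>r. 2 * e r) \<longlonglongrightarrow> 0"
    unfolding e_def using tendsto_mult_right_zero[OF LIMSEQ_Suc[OF lim_const_over_n[of 1]]] by simp
  have FY: "(\<lambda>r. F (Y r)) \<longlonglongrightarrow> 0"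
    using YV e by (intro Lim_null_comparison[OF _ e0] always_eventually) (smt (verit) real_norm_def)
  have Y: "Y \<longlonglongrightarrow> xb"
    using YV by (subst tendsto_dist_iff, intro Lim_null_comparison[OF _ e0] always_eventually) (simp add: less_imp_le)
  have V: "V \<longlonglongrightarrow> 0"
    using YV by (intro Lim_null_comparison[OF _ e0] always_eventually) (simp add: less_imp_le)
  obtain \<sigma> where \<sigma>: "strict_mono \<sigma>" and dec: "decseq (\<lambda>r. F (Y (\<sigma> r)))"
    using decseq_subseq_if_pos_LIMSEQ_zero[OF _ FY] YV by blast
  show ?thesis
    using LIMSEQ_subseq_LIMSEQ[OF Y \<sigma>] LIMSEQ_subseq_LIMSEQ[OF FY \<sigma>] LIMSEQ_subseq_LIMSEQ[OF V \<sigma>] dec YV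
    by (intro exI[of _ "Y \<circ> \<sigma>"] exI[of _ "V \<circ> \<sigma>"]) (simp add: o_def)
qed

lemma abs_le_supdist:
  assumes "compact T" "continuous_on T b" "continuous_on T b'" "t \<in> T"
  shows "\<bar>b t - b' t\<bar> \<le> supdist T b b'"
proof -
  have "compact ((\<lambda>t. \<bar>b t - b' t\<bar>) ` T)"
    using assms(1-3) by (intro compact_continuous_image continuous_intros)
  then have "bdd_above (insert 0 ((\<lambda>t. \<bar>b t - b' t\<bar>) ` T))"
    by (simp add: bounded_imp_bdd_above compact_imp_bounded)
  then show ?thesis unfolding supdist_def using assms(4) by (intro cSup_upper) auto
qed

locale convex_sip =
  fixes T :: "'z::metric_space set" and f :: "real^'n \<Rightarrow> real" and g :: "'z \<Rightarrow> real^'n \<Rightarrow> real"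
    and cb :: "real^'n" and bb :: "'z \<Rightarrow> real" and xb :: "real^'n"
  assumes compact_T: "compact T"
    and convex_f: "convex_on UNIV f"
    and convex_g: "\<And>t. t \<in> T \<Longrightarrow> convex_on UNIV (g t)"
    and continuous_g: "continuous_on (T \<times> UNIV) (\<lambda>(t, x). g t x)"
    and continuous_bb: "continuous_on T bb"
    and xb_Sol: "xb \<in> Sol T f g cb bb"
begin

abbreviation F where "F \<equiv> fbar T f g cb bb xb"

lemma bdd_above_constraint_gaps: "bdd_above ((\<lambda>t. g t x - bb t) ` T)"
proof -
  have "continuous_on T (\<lambda>t. (t, x))" "(\<lambda>t. (t, x)) ` T \<subseteq> T \<times> UNIV"
    by (auto intro: continuous_intros)
  then have "continuous_on T (\<lambda>t. g t x)" using continuous_on_compose2[OF continuous_g] by fastforce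
  then have "compact ((\<lambda>t. g t x - bb t) ` T)"
    using compact_T continuous_bb by (intro compact_continuous_image continuous_intros)
  then show ?thesis by (simp add: bounded_imp_bdd_above compact_imp_bounded)
qed

lemma fbar_le_iff: "F x \<le> c \<longleftrightarrow> f x - f xb + cb \<bullet> (x - xb) \<le> c \<and> (\<forall>t\<in>T. g t x - bb t \<le> c)"
  unfolding fbar_def by (simp add: cSup_le_iff bdd_above_constraint_gaps)

lemma objective_gap_le_fbar: "f x - f xb + cb \<bullet> (x - xb) \<le> F x"
  using fbar_le_iff by blast

lemma constraint_gap_le_fbar: "t \<in> T \<Longrightarrow> g t x - bb t \<le> F x"
  using fbar_le_iff by blast

lemma fbar_nonneg: "0 \<le> F x"
proof (cases "\<forall>t\<in>T. g t x \<le> bb t")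
  case True
  then have "f xb + cb \<bullet> xb \<le> f x + cb \<bullet> x" using xb_Sol by (auto simp: Sol_def feas_def)
  then show ?thesis using objective_gap_le_fbar[of x] by (simp add: inner_diff_right)
next
  case False
  then show ?thesis using constraint_gap_le_fbar[of _ x] by force
qed

lemma Sol_eq_fbar_le_0: "Sol T f g cb bb = {x. F x \<le> 0}"
  using xb_Sol by (auto simp: fbar_le_iff Sol_def feas_def inner_diff_right)

lemma Lev_eq_fbar_le_0: "Lev T f g cb (f xb + cb \<bullet> xb, bb) = {x. F x \<le> 0}"
  by (auto simp: fbar_le_iff Lev_def inner_diff_right)

lemma convex_fbar: "convex_on UNIV F"
proof (rule convex_onI)
  fix u :: real and x y :: "real^'n"
  assume u: "0 < u" "u < 1"
  define z where "z = (1 - u) *\<^sub>R x + u *\<^sub>R y"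
  have comb: "(1 - u) * a + u * b \<le> (1 - u) * F x + u * F y" if "a \<le> F x" "b \<le> F y" for a b
    using u that by (intro add_mono mult_left_mono) auto
  show "F z \<le> (1 - u) * F x + u * F y"
    unfolding fbar_le_iff
  proof (intro conjI ballI)
    have "f z - f xb + cb \<bullet> (z - xb)
        \<le> (1 - u) * (f x - f xb + cb \<bullet> (x - xb)) + u * (f y - f xb + cb \<bullet> (y - xb))"
      using convex_onD[OF convex_f, of u x y] u by (simp add: z_def inner_diff_right algebra_simps)
    also have "\<dots> \<le> (1 - u) * F x + u * F y" by (intro comb objective_gap_le_fbar)
    finally show "f z - f xb + cb \<bullet> (z - xb) \<le> (1 - u) * F x + u * F y" .
  next
    fix t assume t: "t \<in> T"
    have "g t z - bb t \<le> (1 - u) * (g t x - bb t) + u * (g t y - bb t)"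
      using convex_onD[OF convex_g[OF t], of u x y] u by (simp add: z_def algebra_simps)
    also have "\<dots> \<le> (1 - u) * F x + u * F y" using t by (intro comb constraint_gap_le_fbar)
    finally show "g t z - bb t \<le> (1 - u) * F x + u * F y" .
  qed
qed simp

lemma fbar_le_pdist:
  assumes "p \<in> param_space T" "x \<in> Lev T f g cb p"
  shows "F x \<le> pdist T p (f xb + cb \<bullet> xb, bb)"
  unfolding fbar_le_iff
proof (intro conjI ballI)
  show "f x - f xb + cb \<bullet> (x - xb) \<le> pdist T p (f xb + cb \<bullet> xb, bb)"
    using assms(2) by (simp add: Lev_def pdist_def inner_diff_right le_max_iff_disj) arith
next
  fix t assume "t \<in> T"
  then have "\<bar>snd p t - bb t\<bar> \<le> supdist T (snd p) bb"
    using assms(1) by (intro abs_le_supdist compact_T continuous_bb) (auto simp: param_space_def)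
  moreover have "g t x \<le> snd p t" using assms(2) \<open>t \<in> T\<close> by (simp add: Lev_def)
  ultimately show "g t x - bb t \<le> pdist T p (f xb + cb \<bullet> xb, bb)"
    unfolding pdist_def by (simp add: max.coboundedI2)
qed

lemma no_linear_error_bound_if_not_calm:
  assumes not_calm: "\<not> q_order_calm (pdist T) (param_space T) (Lev T f g cb) q (f xb + cb \<bullet> xb, bb) xb"
    and "q \<le> 1" "0 < e"
  shows "\<exists>x. dist x xb < e \<and> 0 < F x \<and> F x < e * infdist x {x. F x \<le> 0}"
proof -
  define \<epsilon> where "\<epsilon> = min e 1"
  have "0 < \<epsilon>" using \<open>0 < e\<close> by (simp add: \<epsilon>_def)
  then have "\<not> (\<forall>p\<in>param_space T. \<forall>x\<in>Lev T f g cb p.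
      pdist T p (f xb + cb \<bullet> xb, bb) < \<epsilon> \<longrightarrow> dist x xb < \<epsilon> \<longrightarrow>
      \<epsilon> * infdist x {x. F x \<le> 0} \<le> pdist T p (f xb + cb \<bullet> xb, bb) powr q)"
    using not_calm unfolding q_order_calm_def Lev_eq_fbar_le_0 by blast
  then obtain p x where p: "p \<in> param_space T" and x: "x \<in> Lev T f g cb p"
    and \<delta>: "pdist T p (f xb + cb \<bullet> xb, bb) < \<epsilon>" and "dist x xb < \<epsilon>"
    and not_le: "pdist T p (f xb + cb \<bullet> xb, bb) powr q < \<epsilon> * infdist x {x. F x \<le> 0}"
    by (auto simp: not_le)
  have "F x \<le> pdist T p (f xb + cb \<bullet> xb, bb)" using p x by (rule fbar_le_pdist)
  also have "\<dots> \<le> pdist T p (f xb + cb \<bullet> xb, bb) powr q"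
    using powr_mono'[OF \<open>q \<le> 1\<close>, of "pdist T p (f xb + cb \<bullet> xb, bb)"] \<delta>
    by (simp add: \<epsilon>_def pdist_def)
  finally have Fx: "F x < \<epsilon> * infdist x {x. F x \<le> 0}" using not_le by linarith
  then have "0 < F x" using fbar_nonneg[of x] by (cases "F x \<le> 0") auto
  moreover have "\<epsilon> * infdist x {x. F x \<le> 0} \<le> e * infdist x {x. F x \<le> 0}"
    by (simp add: \<epsilon>_def mult_right_mono infdist_nonneg)
  ultimately show ?thesis using Fx \<open>dist x xb < \<epsilon>\<close> by (intro exI[of _ x]) (simp add: \<epsilon>_def)
qed

end

theorem proposition4p4:
  fixes T :: "'z::metric_space set"
    and f :: "real^'n \<Rightarrow> real"
    and g :: "'z \<Rightarrow> real^'n \<Rightarrow> real"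
    and q :: real
    and cb :: "real^'n" and bb :: "'z \<Rightarrow> real" and xb :: "real^'n"
  assumes T: "compact T" "T \<noteq> UNIV"
    and f_cvx: "convex_on UNIV f"
    and g_cvx: "\<And>t. t \<in> T \<Longrightarrow> convex_on UNIV (g t)"
    and g_cont: "continuous_on (T \<times> UNIV) (\<lambda>(t, x). g t x)"
    and q: "0 < q" "q \<le> 1"
    and bb_cont: "continuous_on T bb"
    and xb_sol: "xb \<in> Sol T f g cb bb"
    and not_calm: "\<not> q_order_calm (pdist T) (param_space T) (Lev T f g cb) q
                        (f xb + cb \<bullet> xb, bb) xb"
  shows "\<exists>x v :: nat \<Rightarrow> real^'n.
           x \<longlonglongrightarrow> xb
         \<and> (\<forall>r. fbar T f g cb bb xb (x r) > 0)
         \<and> decseq (\<lambda>r. fbar T f g cb bb xb (x r))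
         \<and> (\<lambda>r. fbar T f g cb bb xb (x r)) \<longlonglongrightarrow> 0
         \<and> (\<forall>r. v r \<in> subdiff (fbar T f g cb bb xb) (x r) \<and> v r \<noteq> 0)
         \<and> v \<longlonglongrightarrow> 0
         \<and> (\<forall>r. infdist (x r) (Sol T f g cb bb) \<ge> fbar T f g cb bb xb (x r) / norm (v r))"
proof -
  interpret convex_sip T f g cb bb xb
    using assms by unfold_locales
  have "xb \<in> {x. fbar T f g cb bb xb x \<le> 0}"
    using xb_sol by (simp add: Sol_eq_fbar_le_0)
  from subgradient_sequence_if_no_linear_error_bound[OF convex_fbar fbar_nonneg this
      no_linear_error_bound_if_not_calm[OF not_calm q(2)]]
  show ?thesis unfolding Sol_eq_fbar_le_0 .
qed

end
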